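(* Let $\lambda\in\mathbb R$ with $\alpha=1-\lambda>0$, and let $\mathcal Q_\lambda$ be a $\lambda$-exponential family satisfying Assumptions A and B. Let $x_1,\dots,x_N\in\mathcal X$ satisfy $x_i\in S_\vartheta$ for all $i$ and all $\vartheta\in\operatorname{dom}\varphi_\lambda$. Let $J\ge1$, weights $\xi_{k,1},\dots,\xi_{k,J}\ge0$ summing to $1$ and parameters $\vartheta_{k,1},\dots,\vartheta_{k,J}\in\operatorname{dom}\varphi_\lambda$, and for $j\in\{1,\dots,J\}$ define $\gamma_{k,j}(x)=\frac{\xi_{k,j}q_{\vartheta_{k,j}}(x)}{\sum_{j'=1}^J\xi_{k,j'}q_{\vartheta_{k,j'}}(x)}$. Fix $j$, assume $\sum_{i'}\gamma_{k,j}(x_{i'})>0$, set $w_i=\gamma_{k,j}(x_i)/\sum_{i'=1}^N\gamma_{k,j}(x_{i'})$ and $\bar T=\sum_{i=1}^Nw_iT(x_i)$, and suppose there exists $\vartheta_{k+1,j}\in\operatorname{dom}\varphi_\lambda$ with $q^{(\alpha)}_{\vartheta_{k+1,j}}(T)=\bar T$. Let $F(\vartheta)=\sum_{i=1}^N\gamma_{k,j}(x_i)\log q_\vartheta(x_i)$. (i) If $\lambda=0$, $\vartheta_{k+1,j}$ maximizes $F$ over $\operatorname{dom}\varphi_\lambda$. (ii) If $\lambda<0$ (resp. $\lambda>0$), $\vartheta_{k+1,j}$ maximizes over $\operatorname{dom}\varphi_\lambda$ the function $\vartheta\mapsto\big(\sum_{i'}\gamma_{k,j}(x_{i'})\big)\big(c_\lambda(\vartheta,\bar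 T)-\varphi_\lambda(\vartheta)\big)$, which is a lower bound (resp. upper bound) of $F$ on $\operatorname{dom}\varphi_\lambda$.
   Context: $\mathcal H$ is a finite-dimensional real Hilbert space; $\mathcal X$ a measurable space with measure $m$; $p(f)=\int fp\,dm$. Conventions $\log s=-\infty$ for $s\le0$, $\exp(-\infty)=0$. Coupling $c_\lambda(u,v)=\frac1\lambda\log(1+\lambda\langle u,v\rangle)$ ($\lambda\ne0$), $c_0=\langle\cdot,\cdot\rangle$. For measurable $T:\mathcal X\to\mathcal H$: $\varphi_\lambda(\vartheta)=\log\int\exp(c_\lambda(\vartheta,T))dm$, $\operatorname{dom}\varphi_\lambda=\{\varphi_\lambda<+\infty\}$, $q_\vartheta=\exp(c_\lambda(\vartheta,T)-\varphi_\lambda(\vartheta))$, $\mathcal Q_\lambda=\{q_\vartheta:\vartheta\in\operatorname{dom}\varphi_\lambda\}$, support $S_\vartheta=\{x:1+\lambda\langle\vartheta,T(x)\rangle>0\}$. Escort $p^{(\alpha)}=p^\alpha/\int p^\alpha dm$; $p_{|Y}=p\mathbf 1_Y$. Compatibility: $p$ is $q_\vartheta$-compatible if $\int p_{|S_\vartheta}^\alpha dm\in(0,\infty)$ and $\int Tp_{|S_\vartheta}^\alpha dm$ has finite components; $\mathcal Q_\lambda$-compatible if for every $\vartheta\in\operatorname{dom}\varphi_\lambda$. Assumption A: $\alpha>0$ and $\varphi_\lambda$ proper (never $-\infty$, nonempty domain). Assumption B: there is a nonempty $S_\lambda$ with $S_\vartheta=S_\lambda$ for all $\vartheta\in\operatorname{dom}\varphi_\lambda$,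 and each $q_\vartheta\in\mathcal Q_\lambda$ is $\mathcal Q_\lambda$-compatible. *)

theory Defs
  imports "HOL-Analysis.Analysis"
begin

definition clam :: "real \<Rightarrow> 'h::euclidean_space \<Rightarrow> 'h \<Rightarrow> ereal" where
  "clam l u v = (if l = 0 then ereal (inner u v)
     else if 1 + l * inner u v > 0 then ereal (ln (1 + l * inner u v) / l) else -\<infinity>)"

definition expc :: "real \<Rightarrow> 'h::euclidean_space \<Rightarrow> 'h \<Rightarrow> real" where
  "expc l u v = (case clam l u v of ereal r \<Rightarrow> exp r | _ \<Rightarrow> 0)"

definition phi :: "'x measure \<Rightarrow> ('x \<Rightarrow> 'h::euclidean_space) \<Rightarrow> real \<Rightarrow> 'h \<Rightarrow> ereal" where
  "phi M T l th = (let I = (\<integral>\<^sup>+ x. ennreal (expc l th (T x)) \<partial>M) in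
     if I = \<infinity> then \<infinity> else if I = 0 then -\<infinity> else ereal (ln (enn2real I)))"

definition dom_phi :: "'x measure \<Rightarrow> ('x \<Rightarrow> 'h::euclidean_space) \<Rightarrow> real \<Rightarrow> 'h set" where
  "dom_phi M T l = {th. phi M T l th < \<infinity>}"

text \<open>The density q_theta = exp(c_lambda(theta,T) - phi_lambda(theta)) (for theta in the domain, phi finite).\<close>
definition qdens :: "'x measure \<Rightarrow> ('x \<Rightarrow> 'h::euclidean_space) \<Rightarrow> real \<Rightarrow> 'h \<Rightarrow> 'x \<Rightarrow> real" where
  "qdens M T l th x = expc l th (T x) / exp (real_of_ereal (phi M T l th))"

definition supp :: "'x measure \<Rightarrow> ('x \<Rightarrow> 'h::euclidean_space) \<Rightarrow> real \<Rightarrow> 'h \<Rightarrow> 'x set" where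
  "supp M T l th = {x \<in> space M. 1 + l * inner th (T x) > 0}"

definition compat :: "'x measure \<Rightarrow> ('x \<Rightarrow> 'h::euclidean_space) \<Rightarrow> real \<Rightarrow> real \<Rightarrow> ('x \<Rightarrow> real) \<Rightarrow> 'h \<Rightarrow> bool" where
  "compat M T l a p th \<longleftrightarrow>
     (let pS = (\<lambda>x. p x * indicator (supp M T l th) x) in
       (\<integral>\<^sup>+ x. ennreal ((pS x) powr a) \<partial>M) \<noteq> 0 \<and>
       (\<integral>\<^sup>+ x. ennreal ((pS x) powr a) \<partial>M) \<noteq> \<infinity> \<and>
       integrable M (\<lambda>x. ((pS x) powr a) *\<^sub>R T x))"

definition assumptionA :: "'x measure \<Rightarrow> ('x \<Rightarrow> 'h::euclidean_space) \<Rightarrow> real \<Rightarrow> real \<Rightarrow> bool" where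
  "assumptionA M T l a \<longleftrightarrow> a > 0 \<and> (\<forall>th. phi M T l th \<noteq> -\<infinity>) \<and> dom_phi M T l \<noteq> {}"

definition assumptionB :: "'x measure \<Rightarrow> ('x \<Rightarrow> 'h::euclidean_space) \<Rightarrow> real \<Rightarrow> real \<Rightarrow> bool" where
  "assumptionB M T l a \<longleftrightarrow>
     (\<exists>S0. S0 \<noteq> {} \<and> (\<forall>th \<in> dom_phi M T l. supp M T l th = S0)) \<and>
     (\<forall>th \<in> dom_phi M T l. \<forall>th' \<in> dom_phi M T l. compat M T l a (qdens M T l th) th')"

definition escort_mean :: "'x measure \<Rightarrow> ('x \<Rightarrow> 'h::euclidean_space) \<Rightarrow> real \<Rightarrow> real \<Rightarrow> 'h \<Rightarrow> 'h" where
  "escort_mean M T l a th =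
     (1 / (\<integral>x. (qdens M T l th x) powr a \<partial>M)) *\<^sub>R (\<integral>x. ((qdens M T l th x) powr a) *\<^sub>R T x \<partial>M)"

end

theory Submission
  imports Defs "HOL-Probability.Probability_Measure"
begin

(*
  Let eta be the escort mean of q_theta0. The identity
  q_theta0^alpha * (1 + lambda <theta0, T>) = Z(theta0)^lambda * q_theta0, with alpha = 1 - lambda,
  turns escort averages into ordinary q_theta0-averages. Jensen's inequality under q_theta0,
  for exp applied to <theta - theta0, T> when lambda = 0 and for t |-> t^(1/lambda) (convex because
  alpha > 0) applied to (1 + lambda <theta, T>) / (1 + lambda <theta0, T>) otherwise, then gives
  Z(theta) / Z(theta0) >= exp (c_lambda(theta, eta) - c_lambda(theta0, eta)): theta0 maximizes
  c_lambda(theta, eta) - phi_lambda(theta).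
  The weighted log-likelihood F differs from this objective (scaled by the total weight) only in
  averaging c_lambda(theta, T x_i) instead of evaluating c_lambda at the average; as v |-> c_lambda(theta, v)
  is concave for lambda > 0, convex for lambda < 0 and linear for lambda = 0, finite Jensen yields the
  bounds, with equality when lambda = 0.
*)

lemma powr_convex_nonpos:
  assumes "p \<le> 0" shows "convex_on {0<..} (\<lambda>x::real. x powr p)"
proof (rule f''_ge0_imp_convex)
  show "((\<lambda>x. x powr p) has_real_derivative p * x powr (p - 1)) (at x)" if "x \<in> {0<..}" for x
    using that by (auto intro!: derivative_eq_intros)
  show "((\<lambda>x. p * x powr (p - 1)) has_real_derivative p * ((p - 1) * x powr (p - 2))) (at x)"
    if "x \<in> {0<..}" for x
    using that by (auto intro!: derivative_eq_intros simp: diff_diff_eq)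
  show "0 \<le> p * ((p - 1) * x powr (p - 2))" for x
    using assms by (intro mult_nonpos_nonpos mult_nonpos_nonneg) auto
qed auto

lemma jensens_inequality_density:
  fixes f y :: "'a \<Rightarrow> real" and \<phi> :: "real \<Rightarrow> real"
  assumes f: "integrable M f" "\<And>x. x \<in> space M \<Longrightarrow> 0 \<le> f x" "(\<integral>x. f x \<partial>M) = 1"
    and y: "y \<in> borel_measurable M" "integrable M (\<lambda>x. f x * y x)"
    and \<phi>y: "(\<lambda>x. \<phi> (y x)) \<in> borel_measurable M" "integrable M (\<lambda>x. f x * \<phi> (y x))"
    and y_range: "AE x in M. 0 < f x \<longrightarrow> y x \<in> I"
    and I: "I = {a<..<b} \<or> I = {a<..} \<or> I = {..<b} \<or> I = UNIV"
    and \<phi>: "convex_on I \<phi>"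
  shows "\<phi> (\<integral>x. f x * y x \<partial>M) \<le> (\<integral>x. f x * \<phi> (y x) \<partial>M)"
proof -
  have f_meas: "f \<in> borel_measurable M" and f_AE: "AE x in M. 0 \<le> f x"
    using f by auto
  interpret P: prob_space "density M f"
  proof
    have "emeasure (density M f) (space M) = (\<integral>\<^sup>+x. ennreal (f x) * indicator (space M) x \<partial>M)"
      using f_meas by (simp add: emeasure_density)
    also have "\<dots> = (\<integral>\<^sup>+x. ennreal (f x) \<partial>M)"
      by (rule nn_integral_cong) simp
    also have "\<dots> = 1"
      using f by (simp add: nn_integral_eq_integral)
    finally show "emeasure (density M f) (space (density M f)) = 1" by simp
  qed
  have "\<phi> (P.expectation y) \<le> P.expectation (\<lambda>x. \<phi> (y x))"
  proof (rule P.jensens_inequality[OF _ _ I _ \<phi>])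
    show "integrable (density M f) y" "integrable (density M f) (\<lambda>x. \<phi> (y x))"
      using y \<phi>y by (simp_all add: integrable_density[OF _ f_meas f_AE])
    show "AE x in density M f. y x \<in> I"
      using y_range f_meas by (simp add: AE_density)
  qed
  then show ?thesis
    using y \<phi>y by (simp add: integral_density[OF _ f_meas f_AE])
qed

definition coupling :: "real \<Rightarrow> 'h::real_inner \<Rightarrow> 'h \<Rightarrow> real" where
  "coupling l u v = (if l = 0 then inner u v else ln (1 + l * inner u v) / l)"

lemma clam_eq_coupling: "0 < 1 + l * inner u v \<Longrightarrow> clam l u v = ereal (coupling l u v)"
  by (simp add: clam_def coupling_def)

lemma clam_eq_minf: "\<not> 0 < 1 + l * inner u v \<Longrightarrow> clam l u v = -\<infinity>"
  by (auto simp: clam_def)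

lemma expc_eq_exp_coupling: "0 < 1 + l * inner u v \<Longrightarrow> expc l u v = exp (coupling l u v)"
  by (simp add: expc_def clam_eq_coupling)

lemma expc_eq_0: "\<not> 0 < 1 + l * inner u v \<Longrightarrow> expc l u v = 0"
  by (simp add: expc_def clam_eq_minf)

lemma expc_eq_powr:
  "l \<noteq> 0 \<Longrightarrow> 0 < 1 + l * inner u v \<Longrightarrow> expc l u v = (1 + l * inner u v) powr (1 / l)"
  by (simp add: expc_eq_exp_coupling coupling_def powr_def)

lemma expc_nonneg: "0 \<le> expc l u v"
  by (cases "0 < 1 + l * inner u v") (simp_all add: expc_eq_exp_coupling expc_eq_0)

lemma borel_measurable_expc [measurable]:
  assumes [measurable]: "T \<in> borel_measurable M"
  shows "(\<lambda>x. expc l u (T x)) \<in> borel_measurable M"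
proof -
  have "expc l u v = (if 0 < 1 + l * inner u v then exp (coupling l u v) else 0)" for v
    by (simp add: expc_eq_exp_coupling expc_eq_0)
  then show ?thesis
    unfolding coupling_def by simp
qed

lemma coupling_convex_combination:
  fixes w :: "'i \<Rightarrow> real" and v :: "'i \<Rightarrow> 'h::real_inner"
  assumes I: "finite I" and w: "\<And>i. i \<in> I \<Longrightarrow> 0 \<le> w i" "sum w I = 1"
    and v: "\<And>i. i \<in> I \<Longrightarrow> 0 < 1 + l * inner u (v i)"
  shows convex_combination_pos: "0 < 1 + l * inner u (\<Sum>i\<in>I. w i *\<^sub>R v i)"
    and coupling_convex_combination_ge: "0 \<le> l \<Longrightarrow>
      (\<Sum>i\<in>I. w i * coupling l u (v i)) \<le> coupling l u (\<Sum>i\<in>I. w i *\<^sub>R v i)"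
    and coupling_convex_combination_le: "l \<le> 0 \<Longrightarrow>
      coupling l u (\<Sum>i\<in>I. w i *\<^sub>R v i) \<le> (\<Sum>i\<in>I. w i * coupling l u (v i))"
proof -
  have I_ne: "I \<noteq> {}" using w by auto
  have affine: "1 + l * inner u (\<Sum>i\<in>I. w i *\<^sub>R v i) = (\<Sum>i\<in>I. w i * (1 + l * inner u (v i)))"
    using w by (simp add: inner_sum_right sum.distrib sum_distrib_left algebra_simps)
  show "0 < 1 + l * inner u (\<Sum>i\<in>I. w i *\<^sub>R v i)"
    using convex_sum[of I "{0<..}" w "\<lambda>i. 1 + l * inner u (v i)"] I w v by (simp add: affine)
  have ln_jensen: "(\<Sum>i\<in>I. w i * ln (1 + l * inner u (v i)))
      \<le> ln (1 + l * inner u (\<Sum>i\<in>I. w i *\<^sub>R v i))"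
    using concave_on_sum[OF I I_ne ln_concave w(2) w(1), of "\<lambda>i. 1 + l * inner u (v i)"] v
    by (simp add: affine)
  have "l = 0 \<Longrightarrow> (\<Sum>i\<in>I. w i * coupling l u (v i)) = coupling l u (\<Sum>i\<in>I. w i *\<^sub>R v i)"
    by (simp add: coupling_def inner_sum_right)
  moreover have "(\<Sum>i\<in>I. w i * coupling l u (v i)) = (\<Sum>i\<in>I. w i * ln (1 + l * inner u (v i))) / l"
    if "l \<noteq> 0" using that by (simp add: coupling_def sum_divide_distrib)
  ultimately show "0 \<le> l \<Longrightarrow>
      (\<Sum>i\<in>I. w i * coupling l u (v i)) \<le> coupling l u (\<Sum>i\<in>I. w i *\<^sub>R v i)"
    and "l \<le> 0 \<Longrightarrow>
      coupling l u (\<Sum>i\<in>I. w i *\<^sub>R v i) \<le> (\<Sum>i\<in>I. w i * coupling l u (v i))"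
    using ln_jensen by (auto simp: coupling_def divide_right_mono divide_right_mono_neg)
qed

locale lambda_exponential_family =
  fixes M :: "'x measure" and T :: "'x \<Rightarrow> 'h::euclidean_space" and l :: real
  assumes T_measurable [measurable]: "T \<in> borel_measurable M"
    and assumption_A: "assumptionA M T l (1 - l)"
begin

definition Z :: "'h \<Rightarrow> real" where
  "Z th = (\<integral>x. expc l th (T x) \<partial>M)"

lemma l_less_1: "l < 1"
  using assumption_A by (simp add: assumptionA_def)

lemma qdens_nonneg: "0 \<le> qdens M T l th x"
  by (simp add: qdens_def expc_nonneg)

lemma qdens_eq_0: "\<not> 0 < 1 + l * inner th (T x) \<Longrightarrow> qdens M T l th x = 0"
  by (simp add: qdens_def expc_eq_0)

lemma borel_measurable_qdens [measurable]: "(\<lambda>x. qdens M T l th x) \<in> borel_measurable M"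
  unfolding qdens_def by measurable

lemma qdens_mult_indicator_supp:
  "x \<in> space M \<Longrightarrow> qdens M T l th x * indicator (supp M T l th) x = qdens M T l th x"
  by (auto simp: supp_def qdens_eq_0 split: split_indicator)

context
  fixes th :: 'h
  assumes th_dom: "th \<in> dom_phi M T l"
begin

lemma integrable_expc: "integrable M (\<lambda>x. expc l th (T x))"
  and Z_pos: "0 < Z th"
  and phi_eq_ln_Z: "phi M T l th = ereal (ln (Z th))"
proof -
  define I where "I = (\<integral>\<^sup>+ x. ennreal (expc l th (T x)) \<partial>M)"
  have phi: "phi M T l th = (if I = \<infinity> then \<infinity> else if I = 0 then -\<infinity> else ereal (ln (enn2real I)))"
    by (simp add: phi_def I_def Let_def)
  have I_finite: "I \<noteq> \<infinity>"
    using th_dom by (auto simp: dom_phi_def phi)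
  moreover have "phi M T l th \<noteq> -\<infinity>"
    using assumption_A by (simp add: assumptionA_def)
  then have "I \<noteq> 0"
    using I_finite by (auto simp: phi)
  moreover have Z_eq: "Z th = enn2real I"
    unfolding Z_def I_def by (rule integral_eq_nn_integral) (simp_all add: expc_nonneg)
  ultimately show "integrable M (\<lambda>x. expc l th (T x))" "0 < Z th" "phi M T l th = ereal (ln (Z th))"
    by (auto intro!: integrableI_nonneg simp: expc_nonneg I_def top.not_eq_extremum phi
             enn2real_positive_iff zero_less_iff_neq_zero)
qed

lemma qdens_eq: "qdens M T l th x = expc l th (T x) / Z th"
  by (simp add: qdens_def phi_eq_ln_Z Z_pos)

lemma integrable_qdens: "integrable M (qdens M T l th)"
  using integrable_expc by (simp add: qdens_eq[abs_def])

lemma integral_qdens: "(\<integral>x. qdens M T l th x \<partial>M) = 1"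
  using Z_pos by (simp add: qdens_eq Z_def)

lemma ln_qdens:
  "0 < 1 + l * inner th (T x) \<Longrightarrow> ln (qdens M T l th x) = coupling l th (T x) - ln (Z th)"
  using Z_pos by (simp add: qdens_eq expc_eq_exp_coupling ln_div)

lemma escort_weight_mult:
  "qdens M T l th x powr (1 - l) * (1 + l * inner th (T x)) = Z th powr l * qdens M T l th x"
proof (cases "0 < 1 + l * inner th (T x)")
  case pos: True
  show ?thesis
  proof (cases "l = 0")
    case True
    then show ?thesis using Z_pos qdens_nonneg[of th x] by simp
  next
    case False
    define u where "u = 1 + l * inner th (T x)"
    have "qdens M T l th x = u powr (1 / l) / Z th"
      using False pos by (simp add: qdens_eq expc_eq_powr u_def)
    moreover have "(u powr (1 / l) / Z th) powr (1 - l) * u = Z th powr l * (u powr (1 / l) / Z th)"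
    proof -
      have u_pos: "0 < u" using pos by (simp add: u_def)
      have "(u powr (1 / l) / Z th) powr (1 - l) = u powr (1 / l - 1) / Z th powr (1 - l)"
        using u_pos Z_pos False by (simp add: powr_divide powr_powr diff_divide_distrib)
      also have "\<dots> = (u powr (1 / l) / u) * (Z th powr l / Z th)"
        using u_pos Z_pos by (simp add: powr_diff)
      finally show ?thesis using u_pos by simp
    qed
    ultimately show ?thesis by (simp add: u_def)
  qed
qed (simp add: qdens_eq_0)

lemma qdens_mult_ratio:
  "qdens M T l th x * ((1 + l * inner u (T x)) / (1 + l * inner th (T x)))
     = Z th powr (- l) * (qdens M T l th x powr (1 - l) * (1 + l * inner u (T x)))"
proof (cases "0 < 1 + l * inner th (T x)")
  case True
  then show ?thesis
    using escort_weight_mult[of x] Z_pos by (simp add: powr_minus field_simps)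
qed (simp add: qdens_eq_0)

lemma qdens_mult_ratio_powr:
  assumes l0: "l \<noteq> 0" and same_sign: "0 < 1 + l * inner th (T x) \<longleftrightarrow> 0 < 1 + l * inner u (T x)"
  shows "qdens M T l th x * ((1 + l * inner u (T x)) / (1 + l * inner th (T x))) powr (1 / l)
           = expc l u (T x) / Z th"
proof (cases "0 < 1 + l * inner th (T x)")
  case True
  with same_sign l0 show ?thesis
    by (simp add: qdens_eq expc_eq_powr powr_divide)
qed (use same_sign in \<open>simp add: qdens_eq_0 expc_eq_0\<close>)

end

context
  fixes th0 :: 'h
  assumes th0_dom: "th0 \<in> dom_phi M T l"
    and th0_compat: "compat M T l (1 - l) (qdens M T l th0) th0"
begin

lemma escort_weight_properties:
  shows integrable_escort_weight: "integrable M (\<lambda>x. qdens M T l th0 x powr (1 - l))"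
    and integrable_escort_weight_scaleR:
      "integrable M (\<lambda>x. qdens M T l th0 x powr (1 - l) *\<^sub>R T x)"
    and escort_weight_integral_pos: "0 < (\<integral>x. qdens M T l th0 x powr (1 - l) \<partial>M)"
proof -
  let ?g = "\<lambda>x. qdens M T l th0 x powr (1 - l)"
  have compat: "(\<integral>\<^sup>+x. ennreal (?g x) \<partial>M) \<noteq> 0"
    "(\<integral>\<^sup>+x. ennreal (?g x) \<partial>M) \<noteq> \<infinity>"
    "integrable M (\<lambda>x. ?g x *\<^sub>R T x)"
    using th0_compat
    by (simp_all add: compat_def Let_def qdens_mult_indicator_supp
        cong: nn_integral_cong Bochner_Integration.integrable_cong)
  show "integrable M ?g"
    using compat by (intro integrableI_nonneg) (auto simp: top.not_eq_extremum)
  show "integrable M (\<lambda>x. ?g x *\<^sub>R T x)" by (fact compat(3))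
  have "(\<integral>x. ?g x \<partial>M) = enn2real (\<integral>\<^sup>+x. ennreal (?g x) \<partial>M)"
    by (rule integral_eq_nn_integral) auto
  then show "0 < (\<integral>x. ?g x \<partial>M)"
    using compat by (simp add: enn2real_positive_iff top.not_eq_extremum zero_less_iff_neq_zero)
qed

lemma integral_escort_weight_scaleR:
  "(\<integral>x. qdens M T l th0 x powr (1 - l) *\<^sub>R T x \<partial>M)
     = (\<integral>x. qdens M T l th0 x powr (1 - l) \<partial>M) *\<^sub>R escort_mean M T l (1 - l) th0"
  using escort_weight_integral_pos by (simp add: escort_mean_def)

lemma integral_escort_weight_affine:
  shows integrable_escort_weight_affine:
      "integrable M (\<lambda>x. qdens M T l th0 x powr (1 - l) * (1 + l * inner u (T x)))"
    and "(\<integral>x. qdens M T l th0 x powr (1 - l) * (1 + l * inner u (T x)) \<partial>M)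
       = (\<integral>x. qdens M T l th0 x powr (1 - l) \<partial>M) * (1 + l * inner u (escort_mean M T l (1 - l) th0))"
proof -
  let ?g = "\<lambda>x. qdens M T l th0 x powr (1 - l)"
  have split: "?g x * (1 + l * inner u (T x)) = ?g x + l * inner u (?g x *\<^sub>R T x)" for x
    by (simp add: algebra_simps)
  show "integrable M (\<lambda>x. ?g x * (1 + l * inner u (T x)))"
    unfolding split using integrable_escort_weight integrable_escort_weight_scaleR
    by (intro Bochner_Integration.integrable_add integrable_mult_right integrable_inner_right)
  show "(\<integral>x. ?g x * (1 + l * inner u (T x)) \<partial>M)
      = (\<integral>x. ?g x \<partial>M) * (1 + l * inner u (escort_mean M T l (1 - l) th0))"
  proof -
    have "(\<integral>x. ?g x + l * inner u (?g x *\<^sub>R T x) \<partial>M)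
        = (\<integral>x. ?g x \<partial>M) + l * inner u (\<integral>x. ?g x *\<^sub>R T x \<partial>M)"
      using integrable_escort_weight integrable_escort_weight_scaleR by (simp del: inner_scaleR_right)
    then show ?thesis
      unfolding split by (simp add: integral_escort_weight_scaleR algebra_simps)
  qed
qed

lemma Z_powr_eq_escort:
  "Z th0 powr l = (\<integral>x. qdens M T l th0 x powr (1 - l) \<partial>M)
                    * (1 + l * inner th0 (escort_mean M T l (1 - l) th0))"
  using integral_escort_weight_affine(2)[of th0]
  by (simp add: escort_weight_mult[OF th0_dom] integral_qdens[OF th0_dom])

lemma escort_mean_pos: "0 < 1 + l * inner th0 (escort_mean M T l (1 - l) th0)"
  using Z_powr_eq_escort Z_pos[OF th0_dom] escort_weight_integral_pos
  by (metis powr_gt_zero zero_less_mult_iff less_irrefl order_less_imp_not_less)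

lemma escort_mean_maximizes_exponential:
  assumes l0: "l = 0" and th: "th \<in> dom_phi M T l"
  shows "inner th (escort_mean M T l (1 - l) th0) - ln (Z th)
       \<le> inner th0 (escort_mean M T l (1 - l) th0) - ln (Z th0)"
proof -
  let ?q = "qdens M T l th0" and ?\<eta> = "escort_mean M T l (1 - l) th0"
  let ?y = "\<lambda>x. inner (th - th0) (T x)"
  have q_powr: "?q x powr (1 - l) = ?q x" for x
    using l0 qdens_nonneg[of th0 x] by simp
  have q_y: "?q x * ?y x = inner (th - th0) (?q x *\<^sub>R T x)" for x
    by simp
  have q_exp_y: "?q x * exp (?y x) = expc l th (T x) / Z th0" for x
    unfolding qdens_eq[OF th0_dom] using l0
    by (simp add: expc_eq_exp_coupling coupling_def inner_diff_left exp_diff)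
  have "exp (\<integral>x. ?q x * ?y x \<partial>M) \<le> (\<integral>x. ?q x * exp (?y x) \<partial>M)"
  proof (rule jensens_inequality_density[where I = UNIV])
    show "integrable M (\<lambda>x. ?q x * ?y x)"
      unfolding q_y using integrable_escort_weight_scaleR by (simp add: q_powr del: inner_scaleR_right)
    show "integrable M (\<lambda>x. ?q x * exp (?y x))"
      unfolding q_exp_y using integrable_expc[OF th] by simp
  qed (simp_all add: integrable_qdens[OF th0_dom] integral_qdens[OF th0_dom] qdens_nonneg exp_convex)
  moreover have "(\<integral>x. ?q x * ?y x \<partial>M) = inner (th - th0) ?\<eta>"
    using integral_escort_weight_scaleR integral_qdens[OF th0_dom] integrable_escort_weight_scaleR
    unfolding q_y by (simp add: q_powr del: inner_scaleR_right)
  moreover have "(\<integral>x. ?q x * exp (?y x) \<partial>M) = Z th / Z th0"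
    unfolding q_exp_y by (simp add: Z_def)
  ultimately have "inner (th - th0) ?\<eta> \<le> ln (Z th / Z th0)"
    using Z_pos[OF th] Z_pos[OF th0_dom] by (simp add: ln_ge_iff)
  then show ?thesis
    using Z_pos[OF th] Z_pos[OF th0_dom] by (simp add: ln_div inner_diff_left)
qed

lemma integral_qdens_mult_ratio:
  shows integrable_qdens_mult_ratio: "integrable M
      (\<lambda>x. qdens M T l th0 x * ((1 + l * inner u (T x)) / (1 + l * inner th0 (T x))))"
    and "(\<integral>x. qdens M T l th0 x * ((1 + l * inner u (T x)) / (1 + l * inner th0 (T x))) \<partial>M)
       = (1 + l * inner u (escort_mean M T l (1 - l) th0))
           / (1 + l * inner th0 (escort_mean M T l (1 - l) th0))"
proof -
  let ?g = "\<lambda>x. qdens M T l th0 x powr (1 - l)"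
  show "integrable M (\<lambda>x. qdens M T l th0 x * ((1 + l * inner u (T x)) / (1 + l * inner th0 (T x))))"
    unfolding qdens_mult_ratio[OF th0_dom]
    using integrable_escort_weight_affine by (rule integrable_mult_right)
  have "(\<integral>x. qdens M T l th0 x * ((1 + l * inner u (T x)) / (1 + l * inner th0 (T x))) \<partial>M)
      = Z th0 powr (- l) * (\<integral>x. ?g x * (1 + l * inner u (T x)) \<partial>M)"
    unfolding qdens_mult_ratio[OF th0_dom] by (rule integral_mult_right_zero)
  also have "\<dots> = (1 + l * inner u (escort_mean M T l (1 - l) th0)) * ((\<integral>x. ?g x \<partial>M) / Z th0 powr l)"
    unfolding integral_escort_weight_affine(2) by (simp add: powr_minus field_simps)
  finally show "(\<integral>x. qdens M T l th0 x * ((1 + l * inner u (T x)) / (1 + l * inner th0 (T x))) \<partial>M)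
      = (1 + l * inner u (escort_mean M T l (1 - l) th0))
          / (1 + l * inner th0 (escort_mean M T l (1 - l) th0))"
    using escort_weight_integral_pos by (simp add: Z_powr_eq_escort)
qed

lemma escort_mean_maximizes_lambda:
  assumes l0: "l \<noteq> 0" and th: "th \<in> dom_phi M T l"
    and supp_eq: "supp M T l th = supp M T l th0"
    and pos: "0 < 1 + l * inner th (escort_mean M T l (1 - l) th0)"
  shows "coupling l th (escort_mean M T l (1 - l) th0) - ln (Z th)
       \<le> coupling l th0 (escort_mean M T l (1 - l) th0) - ln (Z th0)"
proof -
  let ?q = "qdens M T l th0" and ?\<eta> = "escort_mean M T l (1 - l) th0" and ?p = "1 / l"
  let ?y = "\<lambda>x. (1 + l * inner th (T x)) / (1 + l * inner th0 (T x))"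
  have same_sign: "0 < 1 + l * inner th0 (T x) \<longleftrightarrow> 0 < 1 + l * inner th (T x)"
    if "x \<in> space M" for x
    using supp_eq that unfolding supp_def set_eq_iff by blast
  have convex: "convex_on {0<..} (\<lambda>t. t powr ?p)"
  proof (cases "0 < l")
    case True
    then show ?thesis using l_less_1 by (intro powr_convex) simp
  qed (use l0 in \<open>simp add: powr_convex_nonpos\<close>)
  have "(\<integral>x. ?q x * ?y x \<partial>M) powr ?p \<le> (\<integral>x. ?q x * ?y x powr ?p \<partial>M)"
  proof (rule jensens_inequality_density[where I = "{0<..}" and a = 0, OF _ _ _ _ _ _ _ _ _ convex])
    show "integrable M (\<lambda>x. ?q x * ?y x)"
      by (fact integrable_qdens_mult_ratio)
    show "integrable M (\<lambda>x. ?q x * ?y x powr ?p)"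
      using integrable_expc[OF th] same_sign
      by (simp add: Bochner_Integration.integrable_cong[OF refl qdens_mult_ratio_powr[OF th0_dom l0]])
    show "AE x in M. 0 < ?q x \<longrightarrow> ?y x \<in> {0<..}"
    proof (rule AE_I2, intro impI)
      fix x assume x: "x \<in> space M" and "0 < ?q x"
      then have "0 < 1 + l * inner th0 (T x)" using qdens_eq_0[of th0 x] by auto
      with same_sign[OF x] show "?y x \<in> {0<..}" by simp
    qed
  qed (simp_all add: integrable_qdens[OF th0_dom] integral_qdens[OF th0_dom] qdens_nonneg)
  also have "(\<integral>x. ?q x * ?y x powr ?p \<partial>M) = Z th / Z th0"
    using same_sign
    by (simp add: Bochner_Integration.integral_cong[OF refl qdens_mult_ratio_powr[OF th0_dom l0]] Z_def)
  finally have "((1 + l * inner th ?\<eta>) / (1 + l * inner th0 ?\<eta>)) powr ?p \<le> Z th / Z th0"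
    by (simp only: integral_qdens_mult_ratio(2))
  then have "?p * (ln (1 + l * inner th ?\<eta>) - ln (1 + l * inner th0 ?\<eta>)) \<le> ln (Z th) - ln (Z th0)"
    using pos escort_mean_pos Z_pos[OF th] Z_pos[OF th0_dom]
    by (simp add: ln_div ln_powr flip: ln_le_cancel_iff)
  then show ?thesis
    using l0 by (simp add: coupling_def diff_divide_distrib)
qed

lemma escort_mean_maximizes:
  assumes th: "th \<in> dom_phi M T l" and supp_eq: "supp M T l th = supp M T l th0"
  shows "clam l th (escort_mean M T l (1 - l) th0) - phi M T l th
       \<le> clam l th0 (escort_mean M T l (1 - l) th0) - phi M T l th0"
proof (cases "0 < 1 + l * inner th (escort_mean M T l (1 - l) th0)")
  case True
  then have "coupling l th (escort_mean M T l (1 - l) th0) - ln (Z th)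
      \<le> coupling l th0 (escort_mean M T l (1 - l) th0) - ln (Z th0)"
    using escort_mean_maximizes_exponential[OF _ th] escort_mean_maximizes_lambda[OF _ th supp_eq]
    by (cases "l = 0") (simp_all add: coupling_def)
  then show ?thesis
    using True escort_mean_pos by (simp add: clam_eq_coupling phi_eq_ln_Z th th0_dom)
qed (simp add: clam_eq_minf phi_eq_ln_Z th)

end

lemma weighted_ln_qdens_vs_coupling:
  fixes \<gamma> :: "'i \<Rightarrow> real" and xs :: "'i \<Rightarrow> 'x"
  assumes th: "th \<in> dom_phi M T l" and I: "finite I"
    and \<gamma>: "\<And>i. i \<in> I \<Longrightarrow> 0 \<le> \<gamma> i" "0 < sum \<gamma> I"
    and xs: "\<And>i. i \<in> I \<Longrightarrow> xs i \<in> supp M T l th"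
  defines "v \<equiv> (\<Sum>i\<in>I. (\<gamma> i / sum \<gamma> I) *\<^sub>R T (xs i))"
  shows weighted_ln_qdens_le: "0 \<le> l \<Longrightarrow>
      ereal (\<Sum>i\<in>I. \<gamma> i * ln (qdens M T l th (xs i)))
        \<le> ereal (sum \<gamma> I) * (clam l th v - phi M T l th)"
    and weighted_ln_qdens_ge: "l \<le> 0 \<Longrightarrow>
      ereal (sum \<gamma> I) * (clam l th v - phi M T l th)
        \<le> ereal (\<Sum>i\<in>I. \<gamma> i * ln (qdens M T l th (xs i)))"
proof -
  let ?s = "sum \<gamma> I"
  define w where "w i = \<gamma> i / ?s" for i
  have w: "\<And>i. i \<in> I \<Longrightarrow> 0 \<le> w i" "sum w I = 1"
    using \<gamma> by (simp_all add: w_def flip: sum_divide_distrib)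
  have pos: "\<And>i. i \<in> I \<Longrightarrow> 0 < 1 + l * inner th (T (xs i))"
    using xs by (simp add: supp_def)
  have v: "v = (\<Sum>i\<in>I. w i *\<^sub>R T (xs i))"
    by (simp add: v_def w_def)
  have "(\<Sum>i\<in>I. \<gamma> i * ln (qdens M T l th (xs i)))
      = (\<Sum>i\<in>I. \<gamma> i * coupling l th (T (xs i))) - ?s * ln (Z th)"
    using pos by (simp add: ln_qdens[OF th] right_diff_distrib sum_subtractf sum_distrib_right)
  also have "(\<Sum>i\<in>I. \<gamma> i * coupling l th (T (xs i)))
      = ?s * (\<Sum>i\<in>I. w i * coupling l th (T (xs i)))"
    using \<gamma>(2) by (simp add: w_def sum_distrib_left)
  finally have "(\<Sum>i\<in>I. \<gamma> i * ln (qdens M T l th (xs i)))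
      = ?s * ((\<Sum>i\<in>I. w i * coupling l th (T (xs i))) - ln (Z th))"
    by (simp add: right_diff_distrib)
  moreover have "ereal ?s * (clam l th v - phi M T l th) = ereal (?s * (coupling l th v - ln (Z th)))"
    using convex_combination_pos[OF I w pos] by (simp add: v clam_eq_coupling phi_eq_ln_Z[OF th])
  ultimately show "0 \<le> l \<Longrightarrow>
      ereal (\<Sum>i\<in>I. \<gamma> i * ln (qdens M T l th (xs i))) \<le> ereal ?s * (clam l th v - phi M T l th)"
    and "l \<le> 0 \<Longrightarrow>
      ereal ?s * (clam l th v - phi M T l th) \<le> ereal (\<Sum>i\<in>I. \<gamma> i * ln (qdens M T l th (xs i)))"
    using \<gamma>(2) coupling_convex_combination_ge[OF I w pos] coupling_convex_combination_le[OF I w pos]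
    by (simp_all add: v)
qed

end

theorem proposition13:
  fixes M :: "'x measure" and T :: "'x \<Rightarrow> 'h::euclidean_space" and l :: real
    and N J :: nat and xs :: "nat \<Rightarrow> 'x" and xi :: "nat \<Rightarrow> real" and ths :: "nat \<Rightarrow> 'h"
    and j :: nat and thnew :: 'h
  defines "a \<equiv> 1 - l"
  defines "gam \<equiv> (\<lambda>jj x. xi jj * qdens M T l (ths jj) x /
                       (\<Sum>j'=1..J. xi j' * qdens M T l (ths j') x))"
  defines "Tbar \<equiv> (\<Sum>i=1..N. (gam j (xs i) / (\<Sum>i'=1..N. gam j (xs i'))) *\<^sub>R T (xs i))"
  defines "F \<equiv> (\<lambda>th. \<Sum>i=1..N. gam j (xs i) * ln (qdens M T l th (xs i)))"
  defines "G \<equiv> (\<lambda>th. ereal (\<Sum>i'=1..N. gam j (xs i')) * (clam l th Tbar - phi M T l th))"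
  assumes Tmeas: "T \<in> borel_measurable M"
    and alpha_pos: "a > 0"
    and A: "assumptionA M T l a"
    and B: "assumptionB M T l a"
    and xs_space: "\<forall>i\<in>{1..N}. xs i \<in> space M"
    and xs_supp: "\<forall>i\<in>{1..N}. \<forall>th\<in>dom_phi M T l. xs i \<in> supp M T l th"
    and J_pos: "J \<ge> 1"
    and xi_nonneg: "\<forall>jj\<in>{1..J}. xi jj \<ge> 0"
    and xi_sum: "(\<Sum>jj=1..J. xi jj) = 1"
    and ths_dom: "\<forall>jj\<in>{1..J}. ths jj \<in> dom_phi M T l"
    and j_range: "j \<in> {1..J}"
    and gam_pos: "(\<Sum>i'=1..N. gam j (xs i')) > 0"
    and new_dom: "thnew \<in> dom_phi M T l"
    and new_escort: "escort_mean M T l a thnew = Tbar"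
  shows "(l = 0 \<longrightarrow> (\<forall>th\<in>dom_phi M T l. F th \<le> F thnew))
       \<and> (l < 0 \<longrightarrow> (\<forall>th\<in>dom_phi M T l. G th \<le> G thnew)
                   \<and> (\<forall>th\<in>dom_phi M T l. G th \<le> ereal (F th)))
       \<and> (l > 0 \<longrightarrow> (\<forall>th\<in>dom_phi M T l. G th \<le> G thnew)
                   \<and> (\<forall>th\<in>dom_phi M T l. ereal (F th) \<le> G th))"
proof -
  interpret lambda_exponential_family M T l
    using Tmeas A by unfold_locales (simp_all add: a_def)
  have gam_nonneg: "0 \<le> gam j x" for x
    unfolding gam_def using xi_nonneg j_range
    by (intro divide_nonneg_nonneg mult_nonneg_nonneg sum_nonneg) (auto simp: qdens_nonneg)
  have compat: "compat M T l a (qdens M T l thnew) thnew"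
    using B new_dom by (simp add: assumptionB_def)
  have supp_eq: "supp M T l th = supp M T l thnew" if "th \<in> dom_phi M T l" for th
    using B new_dom that by (auto simp: assumptionB_def)
  have G_max: "G th \<le> G thnew" if th: "th \<in> dom_phi M T l" for th
    using escort_mean_maximizes[OF new_dom _ th] compat supp_eq[OF th] gam_pos
    unfolding G_def new_escort[symmetric] a_def by (simp add: ereal_mult_left_mono)
  have F_le_G: "ereal (F th) \<le> G th" if "0 \<le> l" "th \<in> dom_phi M T l" for th
    using weighted_ln_qdens_le[where \<gamma> = "\<lambda>i. gam j (xs i)" and I = "{1..N}" and xs = xs]
      that xs_supp gam_nonneg gam_pos
    unfolding F_def G_def Tbar_def by simp
  have G_le_F: "G th \<le> ereal (F th)" if "l \<le> 0" "th \<in> dom_phi M T l" for th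
    using weighted_ln_qdens_ge[where \<gamma> = "\<lambda>i. gam j (xs i)" and I = "{1..N}" and xs = xs]
      that xs_supp gam_nonneg gam_pos
    unfolding F_def G_def Tbar_def by simp
  have F_max: "F th \<le> F thnew" if "l = 0" "th \<in> dom_phi M T l" for th
  proof -
    have "ereal (F th) \<le> G th" using F_le_G that by simp
    also have "\<dots> \<le> G thnew" using G_max that by simp
    also have "\<dots> \<le> ereal (F thnew)" using G_le_F new_dom that by simp
    finally show ?thesis by simp
  qed
  show ?thesis
    using F_max G_max F_le_G G_le_F by simp
qed

end
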